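(* The problem SPInv is reducible to the problem Prob-SPInv: there is an algorithm which, given access to an oracle solving Prob-SPInv, solves SPInv.
   Context: A deterministic unguarded loop with polynomial updates over variables $x_1,\dots,x_k$ is given by an initial vector $v\in\mathbb{Q}^k$ and an update map $F=(f_1,\dots,f_k)$, $f_j\in\mathbb{Q}[x_1,\dots,x_k]$; its classical invariant ideal is $\{p\in\overline{\mathbb{Q}}[x_1,\dots,x_k]: p(F^n(v))=0\ \forall n\in\mathbb{N}_0\}$ ($\overline{\mathbb{Q}}$ the algebraic numbers). SPInv: given such a loop, compute a finite basis of its classical invariant ideal. An unguarded probabilistic loop with polynomial updates and without nondeterministic choice over $x_1,\dots,x_k$ consists of an initial vector in $\mathbb{Q}^k$ and finitely many transitions, each with a probability in $(0,1]$ (summing to $1$) and a polynomial update map with rational coefficients; each iteration applies one transition chosen at random with its probability. For a monomial $M$, $\mathbb{E}[M_n]$ is the expected value of $M$ after $n$ loop iterations. The moment invariant ideal of order $1$ is $\mathbb{I}^{\le1}=\{p\in\overline{\mathbb{Q}}[\mathbb{E}[x_1],\dots,\mathbb{E}[x_k]]: p(\mathbb{E}[(x_1)_n],\dots,\mathbb{E}[(x_k)_n])=0\ \forall n\in\mathbb{N}_0\}$, where $\mathbb{E}[x_1],\dots,\mathbb{E}[x_k]$ are formal variables. Prob-SPInv: given such a probabilistic loop, compute a finite basis of $\mathbb{I}^{\le1}$. A deterministic loop is in particular such a probabilistic loop with a single transition of probability $1$. *)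

theory Defs
  imports Complex_Main "HOL-Library.Poly_Mapping" "HOL-Computational_Algebra.Polynomial"
begin

text \<open>Multivariate polynomials: finitely supported maps from monomials
  (exponent vectors, variable i has index i, i.e. x_(i+1) is variable i) to coefficients.\<close>
type_synonym 'a mpoly = "(nat \<Rightarrow>\<^sub>0 nat) \<Rightarrow>\<^sub>0 'a"

definition mpeval :: "'a::comm_ring_1 mpoly \<Rightarrow> (nat \<Rightarrow> 'a) \<Rightarrow> 'a" where
  "mpeval p v = (\<Sum>m\<in>Poly_Mapping.keys p. Poly_Mapping.lookup p m * (\<Prod>i\<in>Poly_Mapping.keys (m::nat \<Rightarrow>\<^sub>0 nat). v i ^ Poly_Mapping.lookup m i))"

definition in_vars :: "nat \<Rightarrow> 'a::zero mpoly \<Rightarrow> bool" where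
  "in_vars k p \<longleftrightarrow> (\<forall>m\<in>Poly_Mapping.keys p. Poly_Mapping.keys m \<subseteq> {..<k})"

definition alg_polys :: "nat \<Rightarrow> complex mpoly set" where
  "alg_polys k = {p. in_vars k p \<and> (\<forall>m. algebraic (Poly_Mapping.lookup p m))}"

definition ideal_gen :: "nat \<Rightarrow> complex mpoly set \<Rightarrow> complex mpoly set" where
  "ideal_gen k B = {\<Sum>b\<in>B. q b * b | q. \<forall>b\<in>B. q b \<in> alg_polys k}"

definition is_finite_basis :: "nat \<Rightarrow> complex mpoly set \<Rightarrow> complex mpoly set \<Rightarrow> bool" where
  "is_finite_basis k B I \<longleftrightarrow> finite B \<and> B \<subseteq> alg_polys k \<and> ideal_gen k B = I"

definition mpeval_rat :: "rat mpoly \<Rightarrow> (nat \<Rightarrow> complex) \<Rightarrow> complex" where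
  "mpeval_rat p v = mpeval (Poly_Mapping.map of_rat p) v"

definition apply_upd :: "rat mpoly list \<Rightarrow> (nat \<Rightarrow> complex) \<Rightarrow> (nat \<Rightarrow> complex)" where
  "apply_upd F s = (\<lambda>i. if i < length F then mpeval_rat (F ! i) s else 0)"

definition vec_of :: "rat list \<Rightarrow> (nat \<Rightarrow> complex)" where
  "vec_of v = (\<lambda>i. if i < length v then of_rat (v ! i) else 0)"

text \<open>Deterministic loop: (initial vector, update map).\<close>
type_synonym det_loop = "rat list \<times> rat mpoly list"

definition wf_det_loop :: "nat \<Rightarrow> det_loop \<Rightarrow> bool" where
  "wf_det_loop k L \<longleftrightarrow> length (fst L) = k \<and> length (snd L) = k \<and> (\<forall>f\<in>set (snd L). in_vars k f)"

definition classical_inv_ideal :: "nat \<Rightarrow> det_loop \<Rightarrow> complex mpoly set" where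
  "classical_inv_ideal k L = {p \<in> alg_polys k.
     \<forall>n. mpeval p ((apply_upd (snd L) ^^ n) (vec_of (fst L))) = 0}"

text \<open>Probabilistic loop: (initial vector, list of transitions (probability, update map)).\<close>
type_synonym prob_loop = "rat list \<times> (rat \<times> rat mpoly list) list"

definition wf_prob_loop :: "nat \<Rightarrow> prob_loop \<Rightarrow> bool" where
  "wf_prob_loop k L \<longleftrightarrow> length (fst L) = k \<and> snd L \<noteq> [] \<and>
     (\<forall>(p, F)\<in>set (snd L). 0 < p \<and> p \<le> 1 \<and> length F = k \<and> (\<forall>f\<in>set F. in_vars k f)) \<and>
     (\<Sum>(p, F)\<leftarrow>snd L. p) = 1"

text \<open>Weighted list of the possible states after n iterations (one entry per run).\<close>
fun states_after :: "prob_loop \<Rightarrow> nat \<Rightarrow> (complex \<times> (nat \<Rightarrow> complex)) list" where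
  "states_after L 0 = [(1, vec_of (fst L))]"
| "states_after L (Suc n) =
     concat (map (\<lambda>(w, s). map (\<lambda>(p, F). (w * of_rat p, apply_upd F s)) (snd L)) (states_after L n))"

definition expected_var :: "prob_loop \<Rightarrow> nat \<Rightarrow> nat \<Rightarrow> complex" where
  "expected_var L n i = (\<Sum>(w, s)\<leftarrow>states_after L n. w * s i)"

text \<open>Moment invariant ideal of order 1; formal variable i stands for E[x_(i+1)].\<close>
definition moment_inv_ideal1 :: "nat \<Rightarrow> prob_loop \<Rightarrow> complex mpoly set" where
  "moment_inv_ideal1 k L = {p \<in> alg_polys k. \<forall>n. mpeval p (expected_var L n) = 0}"

text \<open>The reduction: a deterministic loop as a probabilistic loop with one transition of
  probability 1 (clearly computable, as is the identification of E[x_i] with x_i).\<close>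
definition det_to_prob :: "det_loop \<Rightarrow> prob_loop" where
  "det_to_prob L = (fst L, [(1, snd L)])"

end

theory Submission
  imports Defs
begin

text \<open>A loop with a single transition of probability 1 has exactly one run, of weight 1.
  Hence the expected state after n iterations is the deterministic state, the two
  invariant ideals coincide, and any basis of one is a basis of the other.\<close>

lemma states_after_det_to_prob:
  "states_after (det_to_prob L) n = [(1, (apply_upd (snd L) ^^ n) (vec_of (fst L)))]"
  by (induction n) (auto simp: det_to_prob_def)

lemma expected_var_det_to_prob:
  "expected_var (det_to_prob L) n = (apply_upd (snd L) ^^ n) (vec_of (fst L))"
  unfolding expected_var_def states_after_det_to_prob by simp

lemma moment_inv_ideal1_det_to_prob:
  "moment_inv_ideal1 k (det_to_prob L) = classical_inv_ideal k L"
  unfolding moment_inv_ideal1_def classical_inv_ideal_def expected_var_det_to_prob ..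

lemma wf_prob_loop_det_to_prob:
  assumes "wf_det_loop k L"
  shows "wf_prob_loop k (det_to_prob L)"
  using assms by (auto simp: wf_prob_loop_def wf_det_loop_def det_to_prob_def)

theorem theorem5p10:
  fixes k :: nat and L :: det_loop
  assumes "wf_det_loop k L"
  shows "wf_prob_loop k (det_to_prob L) \<and>
    (\<forall>B. is_finite_basis k B (moment_inv_ideal1 k (det_to_prob L))
          \<longrightarrow> is_finite_basis k B (classical_inv_ideal k L))"
  using wf_prob_loop_det_to_prob [OF assms] moment_inv_ideal1_det_to_prob by simp

end
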